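(* For every parsummable category $\mathcal C$, the inclusion $\Theta(\mathcal C)\hookrightarrow\Phi\Sigma(\mathcal C)$ is an equivalence of underlying categories; these inclusions form a natural transformation $\Theta\Rightarrow\Phi\Sigma$ of endofunctors of $\mathbf{ParSumCat}$ that is a levelwise underlying equivalence.
   Context: Let $\omega=\{1,2,\dots\}$, $\mathbf m=\{1,\dots,m\}$, $\mathcal M$ the monoid of injections $\omega\to\omega$. A parsummable category is a small $E\mathcal M$-category (strict action of the chaotic category on $\mathcal M$; $u_*$ the action, $[v,u]\colon u_*\Rightarrow v_*$) all of whose objects have finite support (intersection of finite $A\subset\omega$ with $u_*X=X$ for $u$ fixing $A$ pointwise), with an object $0$ of empty support and a strictly unital, associative, commutative, equivariant sum on disjointly supported pairs; $\mathbf{ParSumCat}$ has morphisms the equivariant functors preserving $0,+$. For injections $\phi,\phi'\colon\mathbf m\times\omega\to\omega$: $\phi_*(X_\bullet)=\sum_i\phi(i,-)_*(X_i)$, $[\phi',\phi]_{X_\bullet}=\sum_i[\phi'(i,-),\phi(i,-)]_{X_i}$. $\Sigma(\mathcal C)$ is the permutative category with objects finite sequences of objects of $\mathcal C$ (empty sequence $\epsilon$ is the unit), morphisms $(X_1,\dots,X_m)\to(Y_1,\dots,Y_n)$ classes $[\psi,f,\phi]$ (injections $\phi\colon\mathbf m\times\omega\to\omega$, $\psi\colon\mathbf n\times\omega\to\omega$, $f\colon\phi_*(X_\bullet)\to\psi_*(Y_\bullet)$) modulo $(\psi,f,\phi)\sim(\psi',[\psi',\psi]f[\phi,\phi'],\phi')$,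 composition $[\rho,g,\theta][\psi,f,\phi]=[\rho,g[\theta,\psi]f,\phi]$, tensor product concatenation and $[\psi,f,\phi]\otimes[\rho,g,\theta]=[\psi+\rho,f+g,\phi+\theta]$ for disjoint-image representatives, symmetry $[\bar\phi,\mathrm{id},\phi]$; $\Sigma(F)$ applies $F$ entrywise and to middle terms. For a small permutative category $\mathscr P$ with unit $\mathbf 1$, $\Phi(\mathscr P)$ is the parsummable category with objects sequences $(P_1,P_2,\dots)$ with $P_i=\mathbf 1$ for almost all $i$, morphisms $P\to Q$ the morphisms $\bigotimes_{i\in\omega}P_i\to\bigotimes_{i\in\omega}Q_i$ in $\mathscr P$, $(u_*P)_i=P_j$ if $i=u(j)$ and $\mathbf 1$ otherwise, structure isomorphisms given by coherence isomorphisms, support $\{i:P_i\ne\mathbf1\}$, and sum by merging disjointly supported sequences; $\Phi(F)$ applies $F$ entrywise. $\Theta(\mathcal C)$ is the full subcategory of $\Phi\Sigma(\mathcal C)$ on the sequences $(X^\bullet_1,X^\bullet_2,\dots)$ each of whose entries is either $\epsilon$ or a $1$-tuple; it is closed under the $E\mathcal M$-action and sum, hence parsummable, and $\Theta$ is a subfunctor of $\Phi\Sigma$. *)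

theory Defs
  imports Main "HOL-Library.Nat_Bijection"
begin

text \<open>Conventions: omega = {1,2,...} is modelled by the type nat (reindexing
by a shift), and the finite set m = {1..m} by {0..<m}.  Injections
m x omega -> omega are curried functions nat => nat => nat that are injective on
{..<m} x UNIV.\<close>

section \<open>Small categories\<close>

record ('o,'a) cat =
  obj :: "'o set"
  arr :: "'a set"
  cdom :: "'a \<Rightarrow> 'o"
  ccod :: "'a \<Rightarrow> 'o"
  cid :: "'o \<Rightarrow> 'a"
  ccomp :: "'a \<Rightarrow> 'a \<Rightarrow> 'a"   (* ccomp C g f = g o f *)

definition hom :: "('o,'a,'z) cat_scheme \<Rightarrow> 'o \<Rightarrow> 'o \<Rightarrow> 'a set" where
  "hom C X Y = {f \<in> arr C. cdom C f = X \<and> ccod C f = Y}"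

definition is_cat :: "('o,'a,'z) cat_scheme \<Rightarrow> bool" where
  "is_cat C \<longleftrightarrow>
     (\<forall>f\<in>arr C. cdom C f \<in> obj C \<and> ccod C f \<in> obj C) \<and>
     (\<forall>X\<in>obj C. cid C X \<in> hom C X X) \<and>
     (\<forall>f\<in>arr C. \<forall>g\<in>arr C. ccod C f = cdom C g \<longrightarrow>
         ccomp C g f \<in> hom C (cdom C f) (ccod C g)) \<and>
     (\<forall>f\<in>arr C. ccomp C (cid C (ccod C f)) f = f \<and> ccomp C f (cid C (cdom C f)) = f) \<and>
     (\<forall>f\<in>arr C. \<forall>g\<in>arr C. \<forall>h\<in>arr C. ccod C f = cdom C g \<and> ccod C g = cdom C h \<longrightarrow>
         ccomp C h (ccomp C g f) = ccomp C (ccomp C h g) f)"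

definition is_functor :: "('o,'a,'z) cat_scheme \<Rightarrow> ('p,'b,'y) cat_scheme \<Rightarrow>
    ('o \<Rightarrow> 'p) \<Rightarrow> ('a \<Rightarrow> 'b) \<Rightarrow> bool" where
  "is_functor C D Fo Fa \<longleftrightarrow>
     (\<forall>X\<in>obj C. Fo X \<in> obj D) \<and>
     (\<forall>f\<in>arr C. Fa f \<in> hom D (Fo (cdom C f)) (Fo (ccod C f))) \<and>
     (\<forall>X\<in>obj C. Fa (cid C X) = cid D (Fo X)) \<and>
     (\<forall>f\<in>arr C. \<forall>g\<in>arr C. ccod C f = cdom C g \<longrightarrow>
         Fa (ccomp C g f) = ccomp D (Fa g) (Fa f))"

definition is_iso :: "('o,'a,'z) cat_scheme \<Rightarrow> 'a \<Rightarrow> bool" where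
  "is_iso C f \<longleftrightarrow> f \<in> arr C \<and>
     (\<exists>g\<in>hom C (ccod C f) (cdom C f).
        ccomp C g f = cid C (cdom C f) \<and> ccomp C f g = cid C (ccod C f))"

definition nat_iso :: "('o,'a,'z) cat_scheme \<Rightarrow> ('p,'b,'y) cat_scheme \<Rightarrow>
    ('o \<Rightarrow> 'p) \<Rightarrow> ('a \<Rightarrow> 'b) \<Rightarrow> ('o \<Rightarrow> 'p) \<Rightarrow> ('a \<Rightarrow> 'b) \<Rightarrow> ('o \<Rightarrow> 'b) \<Rightarrow> bool" where
  "nat_iso C D Fo Fa Go Ga eta \<longleftrightarrow>
     (\<forall>X\<in>obj C. eta X \<in> hom D (Fo X) (Go X) \<and> is_iso D (eta X)) \<and>
     (\<forall>f\<in>arr C. ccomp D (eta (ccod C f)) (Fa f) = ccomp D (Ga f) (eta (cdom C f)))"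

definition cat_equiv :: "('o,'a,'z) cat_scheme \<Rightarrow> ('p,'b,'y) cat_scheme \<Rightarrow>
    ('o \<Rightarrow> 'p) \<Rightarrow> ('a \<Rightarrow> 'b) \<Rightarrow> bool" where
  "cat_equiv C D Fo Fa \<longleftrightarrow> is_functor C D Fo Fa \<and>
     (\<exists>Go Ga eta eps. is_functor D C Go Ga \<and>
        nat_iso C C id id (Go \<circ> Fo) (Ga \<circ> Fa) eta \<and>
        nat_iso D D (Fo \<circ> Go) (Fa \<circ> Ga) id id eps)"

section \<open>Parsummable categories\<close>

type_synonym injf = "nat \<Rightarrow> nat"

definition Minj :: "injf set" where
  "Minj = {u. inj u}"

record ('o,'a) pscat = "('o,'a) cat" +
  act :: "injf \<Rightarrow> 'o \<Rightarrow> 'o"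
  act_ar :: "injf \<Rightarrow> 'a \<Rightarrow> 'a"
  brk :: "injf \<Rightarrow> injf \<Rightarrow> 'o \<Rightarrow> 'a"    (* brk C v u X = [v,u]_X : u_* X \<rightarrow> v_* X *)
  zer :: "'o"
  pls :: "'o \<Rightarrow> 'o \<Rightarrow> 'o"
  pls_ar :: "'a \<Rightarrow> 'a \<Rightarrow> 'a"

text \<open>Strict action of the chaotic category E M on C.\<close>
definition is_EM :: "('o,'a,'z) pscat_scheme \<Rightarrow> bool" where
  "is_EM C \<longleftrightarrow> is_cat C \<and>
     (\<forall>u\<in>Minj. is_functor C C (act C u) (act_ar C u)) \<and>
     (\<forall>X\<in>obj C. act C id X = X) \<and> (\<forall>f\<in>arr C. act_ar C id f = f) \<and>
     (\<forall>u\<in>Minj. \<forall>v\<in>Minj. \<forall>X\<in>obj C. act C (u \<circ> v) X = act C u (act C v X)) \<and>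
     (\<forall>u\<in>Minj. \<forall>v\<in>Minj. \<forall>f\<in>arr C. act_ar C (u \<circ> v) f = act_ar C u (act_ar C v f)) \<and>
     (\<forall>u\<in>Minj. \<forall>v\<in>Minj. \<forall>X\<in>obj C. brk C v u X \<in> hom C (act C u X) (act C v X)) \<and>
     (\<forall>u\<in>Minj. \<forall>X\<in>obj C. brk C u u X = cid C (act C u X)) \<and>
     (\<forall>u\<in>Minj. \<forall>v\<in>Minj. \<forall>w\<in>Minj. \<forall>X\<in>obj C.
         ccomp C (brk C w v X) (brk C v u X) = brk C w u X) \<and>
     (\<forall>u\<in>Minj. \<forall>v\<in>Minj. \<forall>f\<in>arr C.
         ccomp C (brk C v u (ccod C f)) (act_ar C u f) = ccomp C (act_ar C v f) (brk C v u (cdom C f))) \<and>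
     (\<forall>u\<in>Minj. \<forall>v\<in>Minj. \<forall>w\<in>Minj. \<forall>X\<in>obj C.
         act_ar C w (brk C v u X) = brk C (w \<circ> v) (w \<circ> u) X) \<and>
     (\<forall>u\<in>Minj. \<forall>v\<in>Minj. \<forall>w\<in>Minj. \<forall>X\<in>obj C.
         brk C v u (act C w X) = brk C (v \<circ> w) (u \<circ> w) X)"

definition fixes_pw :: "nat set \<Rightarrow> injf \<Rightarrow> bool" where
  "fixes_pw A u \<longleftrightarrow> (\<forall>a\<in>A. u a = a)"

definition supp :: "('o,'a,'z) pscat_scheme \<Rightarrow> 'o \<Rightarrow> nat set" where
  "supp C X = \<Inter>{A. finite A \<and> (\<forall>u\<in>Minj. fixes_pw A u \<longrightarrow> act C u X = X)}"

definition fin_supp :: "('o,'a,'z) pscat_scheme \<Rightarrow> 'o \<Rightarrow> bool" where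
  "fin_supp C X \<longleftrightarrow> (\<exists>A. finite A \<and> (\<forall>u\<in>Minj. fixes_pw A u \<longrightarrow> act C u X = X))"

definition dsj :: "('o,'a,'z) pscat_scheme \<Rightarrow> 'o \<Rightarrow> 'o \<Rightarrow> bool" where
  "dsj C X Y \<longleftrightarrow> supp C X \<inter> supp C Y = {}"

definition is_parsummable :: "('o,'a,'z) pscat_scheme \<Rightarrow> bool" where
  "is_parsummable C \<longleftrightarrow> is_EM C \<and>
     (\<forall>X\<in>obj C. fin_supp C X) \<and>
     zer C \<in> obj C \<and> supp C (zer C) = {} \<and>
     (\<forall>X\<in>obj C. \<forall>Y\<in>obj C. dsj C X Y \<longrightarrow> pls C X Y \<in> obj C) \<and>
     (\<forall>f\<in>arr C. \<forall>g\<in>arr C. dsj C (cdom C f) (cdom C g) \<and> dsj C (ccod C f) (ccod C g) \<longrightarrow>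
         pls_ar C f g \<in> hom C (pls C (cdom C f) (cdom C g)) (pls C (ccod C f) (ccod C g))) \<and>
     (\<forall>X\<in>obj C. \<forall>Y\<in>obj C. dsj C X Y \<longrightarrow> pls_ar C (cid C X) (cid C Y) = cid C (pls C X Y)) \<and>
     (\<forall>f\<in>arr C. \<forall>f'\<in>arr C. \<forall>g\<in>arr C. \<forall>g'\<in>arr C.
         ccod C f = cdom C f' \<and> ccod C g = cdom C g' \<and>
         dsj C (cdom C f) (cdom C g) \<and> dsj C (ccod C f) (ccod C g) \<and> dsj C (ccod C f') (ccod C g') \<longrightarrow>
         pls_ar C (ccomp C f' f) (ccomp C g' g) = ccomp C (pls_ar C f' g') (pls_ar C f g)) \<and>
     (\<forall>X\<in>obj C. pls C X (zer C) = X) \<and>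
     (\<forall>f\<in>arr C. pls_ar C f (cid C (zer C)) = f) \<and>
     (\<forall>X\<in>obj C. \<forall>Y\<in>obj C. \<forall>Z\<in>obj C. dsj C X Y \<and> dsj C X Z \<and> dsj C Y Z \<longrightarrow>
         pls C (pls C X Y) Z = pls C X (pls C Y Z)) \<and>
     (\<forall>f\<in>arr C. \<forall>g\<in>arr C. \<forall>h\<in>arr C.
         dsj C (cdom C f) (cdom C g) \<and> dsj C (cdom C f) (cdom C h) \<and> dsj C (cdom C g) (cdom C h) \<and>
         dsj C (ccod C f) (ccod C g) \<and> dsj C (ccod C f) (ccod C h) \<and> dsj C (ccod C g) (ccod C h) \<longrightarrow>
         pls_ar C (pls_ar C f g) h = pls_ar C f (pls_ar C g h)) \<and>
     (\<forall>X\<in>obj C. \<forall>Y\<in>obj C. dsj C X Y \<longrightarrow> pls C X Y = pls C Y X) \<and>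
     (\<forall>f\<in>arr C. \<forall>g\<in>arr C. dsj C (cdom C f) (cdom C g) \<and> dsj C (ccod C f) (ccod C g) \<longrightarrow>
         pls_ar C f g = pls_ar C g f) \<and>
     (\<forall>u\<in>Minj. \<forall>X\<in>obj C. \<forall>Y\<in>obj C. dsj C X Y \<longrightarrow>
         act C u (pls C X Y) = pls C (act C u X) (act C u Y)) \<and>
     (\<forall>u\<in>Minj. \<forall>f\<in>arr C. \<forall>g\<in>arr C. dsj C (cdom C f) (cdom C g) \<and> dsj C (ccod C f) (ccod C g) \<longrightarrow>
         act_ar C u (pls_ar C f g) = pls_ar C (act_ar C u f) (act_ar C u g)) \<and>
     (\<forall>u\<in>Minj. \<forall>v\<in>Minj. \<forall>X\<in>obj C. \<forall>Y\<in>obj C. dsj C X Y \<longrightarrow>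
         brk C v u (pls C X Y) = pls_ar C (brk C v u X) (brk C v u Y))"

definition is_psmor :: "('o,'a,'z) pscat_scheme \<Rightarrow> ('p,'b,'y) pscat_scheme \<Rightarrow>
    ('o \<Rightarrow> 'p) \<Rightarrow> ('a \<Rightarrow> 'b) \<Rightarrow> bool" where
  "is_psmor C D Fo Fa \<longleftrightarrow> is_functor C D Fo Fa \<and>
     (\<forall>u\<in>Minj. \<forall>X\<in>obj C. Fo (act C u X) = act D u (Fo X)) \<and>
     (\<forall>u\<in>Minj. \<forall>f\<in>arr C. Fa (act_ar C u f) = act_ar D u (Fa f)) \<and>
     (\<forall>u\<in>Minj. \<forall>v\<in>Minj. \<forall>X\<in>obj C. Fa (brk C v u X) = brk D v u (Fo X)) \<and>
     Fo (zer C) = zer D \<and>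
     (\<forall>X\<in>obj C. \<forall>Y\<in>obj C. dsj C X Y \<longrightarrow> Fo (pls C X Y) = pls D (Fo X) (Fo Y)) \<and>
     (\<forall>f\<in>arr C. \<forall>g\<in>arr C. dsj C (cdom C f) (cdom C g) \<and> dsj C (ccod C f) (ccod C g) \<longrightarrow>
         Fa (pls_ar C f g) = pls_ar D (Fa f) (Fa g))"

section \<open>The category Sigma(C) (only what Phi Sigma(C) needs)\<close>

type_synonym minj = "nat \<Rightarrow> nat \<Rightarrow> nat"
type_synonym 'a trip = "minj \<times> 'a \<times> minj"   (* (psi, f, phi) *)

definition injm :: "nat \<Rightarrow> minj \<Rightarrow> bool" where
  "injm m phi \<longleftrightarrow> inj_on (\<lambda>(i,j). phi i j) ({..<m} \<times> UNIV)"

definition imgm :: "nat \<Rightarrow> minj \<Rightarrow> nat set" where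
  "imgm m phi = (\<lambda>(i,j). phi i j) ` ({..<m} \<times> UNIV)"

definition lsum :: "('o,'a,'z) pscat_scheme \<Rightarrow> 'o list \<Rightarrow> 'o" where
  "lsum C xs = foldr (pls C) xs (zer C)"

definition lsum_ar :: "('o,'a,'z) pscat_scheme \<Rightarrow> 'a list \<Rightarrow> 'a" where
  "lsum_ar C fs = foldr (pls_ar C) fs (cid C (zer C))"

definition phis :: "('o,'a,'z) pscat_scheme \<Rightarrow> minj \<Rightarrow> 'o list \<Rightarrow> 'o" where
  "phis C phi Xs = lsum C (map (\<lambda>i. act C (phi i) (Xs ! i)) [0..<length Xs])"

definition brks :: "('o,'a,'z) pscat_scheme \<Rightarrow> minj \<Rightarrow> minj \<Rightarrow> 'o list \<Rightarrow> 'a" where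
  "brks C phi' phi Xs = lsum_ar C (map (\<lambda>i. brk C (phi' i) (phi i) (Xs ! i)) [0..<length Xs])"

definition sig_trip :: "('o,'a,'z) pscat_scheme \<Rightarrow> 'o list \<Rightarrow> 'o list \<Rightarrow> 'a trip \<Rightarrow> bool" where
  "sig_trip C Xs Ys t = (case t of (psi, f, phi) \<Rightarrow>
      injm (length Xs) phi \<and> injm (length Ys) psi \<and> f \<in> hom C (phis C phi Xs) (phis C psi Ys))"

text \<open>The equivalence class of (psi,f,phi): all (psi', [psi',psi] f [phi,phi'], phi').\<close>
definition sig_cls :: "('o,'a,'z) pscat_scheme \<Rightarrow> 'o list \<Rightarrow> 'o list \<Rightarrow> 'a trip \<Rightarrow> 'a trip set" where
  "sig_cls C Xs Ys t = (case t of (psi, f, phi) \<Rightarrow>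
      {(psi', ccomp C (brks C psi' psi Ys) (ccomp C f (brks C phi phi' Xs)), phi') | psi' phi'.
          injm (length Xs) phi' \<and> injm (length Ys) psi'})"

definition is_sig_cls :: "('o,'a,'z) pscat_scheme \<Rightarrow> 'o list \<Rightarrow> 'o list \<Rightarrow> 'a trip set \<Rightarrow> bool" where
  "is_sig_cls C Xs Ys c \<longleftrightarrow> set Xs \<subseteq> obj C \<and> set Ys \<subseteq> obj C \<and>
     (\<exists>t. sig_trip C Xs Ys t \<and> c = sig_cls C Xs Ys t)"

definition rep :: "'a trip set \<Rightarrow> 'a trip" where
  "rep c = (SOME t. t \<in> c)"

definition sig_comp :: "('o,'a,'z) pscat_scheme \<Rightarrow> 'o list \<Rightarrow> 'o list \<Rightarrow> 'o list \<Rightarrow>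
    'a trip set \<Rightarrow> 'a trip set \<Rightarrow> 'a trip set" where
  "sig_comp C Xs Ys Zs c2 c1 = (case rep c1 of (psi, f, phi) \<Rightarrow> case rep c2 of (rho, g, theta) \<Rightarrow>
      sig_cls C Xs Zs (rho, ccomp C g (ccomp C (brks C theta psi Ys) f), phi))"

definition pe :: minj where
  "pe i j = prod_encode (i, j)"

definition sig_idc :: "('o,'a,'z) pscat_scheme \<Rightarrow> 'o list \<Rightarrow> 'a trip set" where
  "sig_idc C Xs = sig_cls C Xs Xs (pe, cid C (phis C pe Xs), pe)"

section \<open>Phi Sigma(C)\<close>

text \<open>Objects: sequences P : omega -> Sigma(C)-objects, almost all equal to the
empty sequence (the unit of Sigma(C)).  Since the tensor product of Sigma(C) is
concatenation (strictly associative and unital), the infinite tensor product of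
such a sequence is the concatenation of its entries, computed by catP.\<close>

type_synonym 'o pobj = "nat \<Rightarrow> 'o list"
type_synonym ('o,'a) parr = "'o pobj \<times> 'o pobj \<times> 'a trip set"

definition bnd :: "'o pobj \<Rightarrow> nat" where
  "bnd P = (LEAST N. \<forall>i\<ge>N. P i = [])"

definition catP :: "'o pobj \<Rightarrow> 'o list" where
  "catP P = concat (map P [0..<bnd P])"

text \<open>labels (i,t): t-th entry of the i-th block, in the order of catP\<close>
definition labs :: "'o pobj \<Rightarrow> (nat \<times> nat) list" where
  "labs P = concat (map (\<lambda>i. map (\<lambda>t. (i, t)) [0..<length (P i)]) [0..<bnd P])"

definition posn :: "'o pobj \<Rightarrow> nat \<times> nat \<Rightarrow> nat" where
  "posn P l = (LEAST k. k < length (labs P) \<and> labs P ! k = l)"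

text \<open>reindex an injection phi indexing catP P along a label map from Q to P\<close>
definition relab :: "'o pobj \<Rightarrow> 'o pobj \<Rightarrow> (nat \<times> nat \<Rightarrow> nat \<times> nat) \<Rightarrow> minj \<Rightarrow> minj" where
  "relab P Q g phi = (\<lambda>k. phi (posn P (g (labs Q ! k))))"

definition ul :: "injf \<Rightarrow> nat \<times> nat \<Rightarrow> nat \<times> nat" where
  "ul u l = (inv u (fst l), snd l)"

definition PhiOb :: "('o,'a,'z) pscat_scheme \<Rightarrow> 'o pobj set" where
  "PhiOb C = {P. (\<forall>i. set (P i) \<subseteq> obj C) \<and> finite {i. P i \<noteq> []}}"

definition PhiAr :: "('o,'a,'z) pscat_scheme \<Rightarrow> ('o,'a) parr set" where
  "PhiAr C = {(P, Q, c). P \<in> PhiOb C \<and> Q \<in> PhiOb C \<and> is_sig_cls C (catP P) (catP Q) c}"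

definition phi_comp :: "('o,'a,'z) pscat_scheme \<Rightarrow> ('o,'a) parr \<Rightarrow> ('o,'a) parr \<Rightarrow> ('o,'a) parr" where
  "phi_comp C b a = (fst a, fst (snd b),
      sig_comp C (catP (fst a)) (catP (fst (snd a))) (catP (fst (snd b))) (snd (snd b)) (snd (snd a)))"

definition phi_id :: "('o,'a,'z) pscat_scheme \<Rightarrow> 'o pobj \<Rightarrow> ('o,'a) parr" where
  "phi_id C P = (P, P, sig_idc C (catP P))"

definition phi_act :: "injf \<Rightarrow> 'o pobj \<Rightarrow> 'o pobj" where
  "phi_act u P = (\<lambda>i. if i \<in> range u then P (inv u i) else [])"

text \<open>u_* f = coherence iso o f o coherence iso^{-1}, written out in Sigma(C)\<close>
definition phi_act_ar :: "('o,'a,'z) pscat_scheme \<Rightarrow> injf \<Rightarrow> ('o,'a) parr \<Rightarrow> ('o,'a) parr" where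
  "phi_act_ar C u a = (case a of (P, Q, c) \<Rightarrow> case rep c of (psi, f, phi) \<Rightarrow>
      (phi_act u P, phi_act u Q,
       sig_cls C (catP (phi_act u P)) (catP (phi_act u Q))
         (relab Q (phi_act u Q) (ul u) psi, f, relab P (phi_act u P) (ul u) phi)))"

text \<open>[v,u]_P : u_* P -> v_* P, the coherence isomorphism of Sigma(C)\<close>
definition phi_brk :: "('o,'a,'z) pscat_scheme \<Rightarrow> injf \<Rightarrow> injf \<Rightarrow> 'o pobj \<Rightarrow> ('o,'a) parr" where
  "phi_brk C v u P = (phi_act u P, phi_act v P,
      sig_cls C (catP (phi_act u P)) (catP (phi_act v P))
        (relab P (phi_act v P) (ul v) pe, cid C (phis C pe (catP P)), relab P (phi_act u P) (ul u) pe))"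

definition phi_pls :: "'o pobj \<Rightarrow> 'o pobj \<Rightarrow> 'o pobj" where
  "phi_pls P Q = (\<lambda>i. P i @ Q i)"

definition mrg :: "'o pobj \<Rightarrow> 'o pobj \<Rightarrow> minj \<Rightarrow> minj \<Rightarrow> minj" where
  "mrg P Q phi theta = (\<lambda>k. case labs (phi_pls P Q) ! k of (i, t) \<Rightarrow>
      if P i \<noteq> [] then phi (posn P (i, t)) else theta (posn Q (i, t)))"

text \<open>sum of morphisms: choose disjoint-image representatives, sum the middle
terms in C, and transport along the coherence isomorphisms (written out)\<close>
definition phi_pls_ar :: "('o,'a,'z) pscat_scheme \<Rightarrow> ('o,'a) parr \<Rightarrow> ('o,'a) parr \<Rightarrow> ('o,'a) parr" where
  "phi_pls_ar C a b = (case a of (P, P', c1) \<Rightarrow> case b of (Q, Q', c2) \<Rightarrow>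
      case (SOME (t1, t2). t1 \<in> c1 \<and> t2 \<in> c2 \<and>
              imgm (length (catP P)) (snd (snd t1)) \<inter> imgm (length (catP Q)) (snd (snd t2)) = {} \<and>
              imgm (length (catP P')) (fst t1) \<inter> imgm (length (catP Q')) (fst t2) = {}) of
        ((psi, f, phi), (rho, g, theta)) \<Rightarrow>
          (phi_pls P Q, phi_pls P' Q',
           sig_cls C (catP (phi_pls P Q)) (catP (phi_pls P' Q'))
             (mrg P' Q' psi rho, pls_ar C f g, mrg P Q phi theta)))"

definition PhiSig :: "('o,'a,'z) pscat_scheme \<Rightarrow> ('o pobj, ('o,'a) parr) pscat" where
  "PhiSig C = \<lparr> obj = PhiOb C, arr = PhiAr C, cdom = fst, ccod = (\<lambda>a. fst (snd a)),
      cid = phi_id C, ccomp = phi_comp C,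
      act = phi_act, act_ar = phi_act_ar C, brk = phi_brk C,
      zer = (\<lambda>_. []), pls = phi_pls, pls_ar = phi_pls_ar C \<rparr>"

definition ThetaOb :: "('o,'a,'z) pscat_scheme \<Rightarrow> 'o pobj set" where
  "ThetaOb C = {P \<in> PhiOb C. \<forall>i. length (P i) \<le> 1}"

definition Theta :: "('o,'a,'z) pscat_scheme \<Rightarrow> ('o pobj, ('o,'a) parr) pscat" where
  "Theta C = (PhiSig C) \<lparr> obj := ThetaOb C,
      arr := {a \<in> PhiAr C. fst a \<in> ThetaOb C \<and> fst (snd a) \<in> ThetaOb C} \<rparr>"

definition PS_ob :: "('o \<Rightarrow> 'p) \<Rightarrow> 'o pobj \<Rightarrow> 'p pobj" where
  "PS_ob Fo P = (\<lambda>i. map Fo (P i))"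

definition PS_ar :: "('p,'b,'y) pscat_scheme \<Rightarrow> ('o \<Rightarrow> 'p) \<Rightarrow> ('a \<Rightarrow> 'b) \<Rightarrow>
    ('o,'a) parr \<Rightarrow> ('p,'b) parr" where
  "PS_ar D Fo Fa a = (case a of (P, Q, c) \<Rightarrow> case rep c of (psi, f, phi) \<Rightarrow>
      (PS_ob Fo P, PS_ob Fo Q, sig_cls D (catP (PS_ob Fo P)) (catP (PS_ob Fo Q)) (psi, Fa f, phi)))"

end

theory Submission
  imports Defs "HOL-Library.Infinite_Set"
begin

text \<open>Since the tensor product of \<open>\<Sigma>(C)\<close> is concatenation, a morphism of \<open>\<Phi>\<Sigma>(C)\<close> only
depends on the concatenations of its source and target.  Replacing an object \<open>P\<close> by the
sequence \<open>flat P\<close> of the 1-tuples of its concatenation therefore gives a functor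
\<open>\<Phi>\<Sigma>(C) \<rightarrow> \<Theta>(C)\<close>, and the identity classes \<open>P \<rightarrow> flat P\<close> are natural isomorphisms
exhibiting it as a quasi-inverse of the inclusion.  Naturality in \<open>C\<close> comes down to
\<open>F(\<phi>\<^sub>*(X\<^sub>\<bullet>)) = \<phi>\<^sub>*(F X\<^sub>\<bullet>)\<close>, which holds because \<open>F\<close> is equivariant and preserves sums
of disjointly supported objects.\<close>

section \<open>Categories and finite supports\<close>

lemma
  assumes "is_cat C"
  shows cat_cid_hom: "X \<in> obj C \<Longrightarrow> cid C X \<in> hom C X X"
    and cat_comp_hom: "f \<in> hom C X Y \<Longrightarrow> g \<in> hom C Y Z \<Longrightarrow> ccomp C g f \<in> hom C X Z"
    and cat_cid_left: "f \<in> hom C X Y \<Longrightarrow> ccomp C (cid C Y) f = f"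
    and cat_cid_right: "f \<in> hom C X Y \<Longrightarrow> ccomp C f (cid C X) = f"
    and cat_comp_assoc: "f \<in> hom C X Y \<Longrightarrow> g \<in> hom C Y Z \<Longrightarrow> h \<in> hom C Z W \<Longrightarrow>
        ccomp C h (ccomp C g f) = ccomp C (ccomp C h g) f"
  using assms unfolding is_cat_def hom_def by (auto 0 0; metis)+

definition supports :: "('o,'a,'z) pscat_scheme \<Rightarrow> nat set \<Rightarrow> 'o \<Rightarrow> bool" where
  "supports C A X \<longleftrightarrow> finite A \<and> (\<forall>u\<in>Minj. fixes_pw A u \<longrightarrow> act C u X = X)"

definition some_support :: "('o,'a,'z) pscat_scheme \<Rightarrow> 'o \<Rightarrow> nat set" where
  "some_support C X = (SOME A. supports C A X)"

lemma supports_some_support: "fin_supp C X \<Longrightarrow> supports C (some_support C X) X"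
  unfolding some_support_def fin_supp_def supports_def by (rule someI_ex)

lemma supp_subset_if_supports: "supports C A X \<Longrightarrow> supp C X \<subseteq> A"
  unfolding supp_def supports_def by blast

lemma dsj_if_supports: "supports C A X \<Longrightarrow> supp C Y \<subseteq> B \<Longrightarrow> A \<inter> B = {} \<Longrightarrow> dsj C X Y"
  unfolding dsj_def by (drule supp_subset_if_supports) blast

lemma finite_inj_extends_to_bij:
  fixes w :: "nat \<Rightarrow> nat"
  assumes "finite A" "inj w"
  shows "\<exists>W. bij W \<and> (\<forall>a\<in>A. W a = w a)"
proof -
  have "infinite (- A)" "infinite (- (w ` A))"
    using assms(1) by (simp_all add: Compl_eq_Diff_UNIV Diff_infinite_finite)
  then have "bij_betw (enumerate (- A)) UNIV (- A)"
    and "bij_betw (enumerate (- (w ` A))) UNIV (- (w ` A))"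
    by (simp_all add: bij_enumerate)
  then obtain g where g: "bij_betw g (- A) (- (w ` A))"
    using bij_betw_trans bij_betw_inv_into by blast
  define W where "W x = (if x \<in> A then w x else g x)" for x
  have "bij_betw W A (w ` A)"
    using assms(2) by (auto simp: W_def bij_betw_def inj_on_def)
  moreover have "bij_betw W (- A) (- (w ` A))"
    using g by (rule bij_betw_cong[THEN iffD1, rotated]) (simp add: W_def)
  ultimately have "bij_betw W (A \<union> - A) (w ` A \<union> - (w ` A))"
    by (rule bij_betw_combine) auto
  then show ?thesis by (auto simp: W_def)
qed

lemma
  assumes "is_psmor C D Fo Fa"
  shows psmor_functor: "is_functor C D Fo Fa"
    and psmor_act: "inj u \<Longrightarrow> X \<in> obj C \<Longrightarrow> Fo (act C u X) = act D u (Fo X)"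
    and psmor_zer: "Fo (zer C) = zer D"
    and psmor_pls: "X \<in> obj C \<Longrightarrow> Y \<in> obj C \<Longrightarrow> dsj C X Y \<Longrightarrow> Fo (pls C X Y) = pls D (Fo X) (Fo Y)"
  using assms unfolding is_psmor_def Minj_def by simp_all

locale EM_category =
  fixes C :: "('o,'a,'z) pscat_scheme"
  assumes EM: "is_EM C"
begin

lemma cat: "is_cat C"
  using EM by (simp add: is_EM_def)

lemma act_obj: "inj u \<Longrightarrow> X \<in> obj C \<Longrightarrow> act C u X \<in> obj C"
  using EM unfolding is_EM_def is_functor_def Minj_def by (elim conjE) simp

lemma act_comp: "inj u \<Longrightarrow> inj v \<Longrightarrow> X \<in> obj C \<Longrightarrow> act C (u \<circ> v) X = act C u (act C v X)"
  using EM unfolding is_EM_def Minj_def by (elim conjE) simp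

lemma brk_hom: "inj u \<Longrightarrow> inj v \<Longrightarrow> X \<in> obj C \<Longrightarrow> brk C v u X \<in> hom C (act C u X) (act C v X)"
  using EM unfolding is_EM_def Minj_def by (elim conjE) simp

lemma brk_refl: "inj u \<Longrightarrow> X \<in> obj C \<Longrightarrow> brk C u u X = cid C (act C u X)"
  using EM unfolding is_EM_def Minj_def by (elim conjE) simp

lemma brk_comp:
  "inj u \<Longrightarrow> inj v \<Longrightarrow> inj w \<Longrightarrow> X \<in> obj C \<Longrightarrow> ccomp C (brk C w v X) (brk C v u X) = brk C w u X"
  using EM unfolding is_EM_def Minj_def by (elim conjE) simp

lemma act_eq_if_agree_on_support:
  assumes X: "X \<in> obj C" and A: "supports C A X" and w: "inj w" "inj w'"
    and agree: "\<forall>a\<in>A. w a = w' a"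
  shows "act C w X = act C w' X"
proof -
  \<comment> \<open>Extend \<open>w\<close> from \<open>A\<close> to a bijection \<open>W\<close>: an injection agreeing with \<open>W\<close> on \<open>A\<close>
      factors as \<open>W \<circ> (inv W \<circ> v)\<close> with the second factor fixing \<open>A\<close>.\<close>
  have "finite A" using A by (simp add: supports_def)
  then obtain W where W: "bij W" "\<forall>a\<in>A. W a = w a"
    using finite_inj_extends_to_bij w(1) by blast
  have "act C v X = act C W X" if v: "inj v" "\<forall>a\<in>A. v a = W a" for v
  proof -
    have "inj (inv W \<circ> v)"
      using v(1) W(1) by (simp add: bij_is_inj bij_imp_bij_inv inj_compose)
    moreover have "fixes_pw A (inv W \<circ> v)"
      using v(2) W(1) unfolding fixes_pw_def by (metis bij_is_inj comp_apply inv_f_f)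
    ultimately have "act C (inv W \<circ> v) X = X"
      using A by (simp add: supports_def Minj_def)
    moreover have "W \<circ> (inv W \<circ> v) = v"
      using W(1) by (auto simp: bij_is_surj surj_f_inv_f)
    ultimately show ?thesis
      using act_comp[OF bij_is_inj[OF W(1)] \<open>inj (inv W \<circ> v)\<close> X] by simp
  qed
  then show ?thesis using w W(2) agree by simp
qed

lemma supports_act:
  assumes X: "X \<in> obj C" and A: "supports C A X" and u: "inj u"
  shows "supports C (u ` A) (act C u X)"
  unfolding supports_def
proof (intro conjI ballI impI)
  show "finite (u ` A)" using A by (simp add: supports_def)
  fix v assume v: "v \<in> Minj" "fixes_pw (u ` A) v"
  have "act C v (act C u X) = act C (v \<circ> u) X"
    using act_comp X v u by (simp add: Minj_def)
  also have "\<dots> = act C u X"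
    by (rule act_eq_if_agree_on_support[OF X A]) (use v u in \<open>auto simp: Minj_def fixes_pw_def inj_compose\<close>)
  finally show "act C v (act C u X) = act C u X" .
qed

end

locale parsummable_category =
  fixes C :: "('o,'a,'z) pscat_scheme"
  assumes parsummable: "is_parsummable C"

sublocale parsummable_category \<subseteq> EM_category
  using parsummable by unfold_locales (simp add: is_parsummable_def)

context parsummable_category
begin

lemma zer_obj: "zer C \<in> obj C"
  using parsummable unfolding is_parsummable_def by (elim conjE) simp

lemma supp_zer: "supp C (zer C) = {}"
  using parsummable unfolding is_parsummable_def by (elim conjE) simp

lemma pls_obj: "X \<in> obj C \<Longrightarrow> Y \<in> obj C \<Longrightarrow> dsj C X Y \<Longrightarrow> pls C X Y \<in> obj C"
  using parsummable unfolding is_parsummable_def by (elim conjE) simp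

lemma pls_zer: "X \<in> obj C \<Longrightarrow> pls C X (zer C) = X"
  using parsummable unfolding is_parsummable_def by (elim conjE) simp

lemma obj_fin_supp: "X \<in> obj C \<Longrightarrow> fin_supp C X"
  using parsummable unfolding is_parsummable_def by (elim conjE) simp

lemma act_pls:
  "inj u \<Longrightarrow> X \<in> obj C \<Longrightarrow> Y \<in> obj C \<Longrightarrow> dsj C X Y \<Longrightarrow>
    act C u (pls C X Y) = pls C (act C u X) (act C u Y)"
  using parsummable unfolding is_parsummable_def Minj_def by (elim conjE) simp

lemma pls_ar_cid:
  "X \<in> obj C \<Longrightarrow> Y \<in> obj C \<Longrightarrow> dsj C X Y \<Longrightarrow> pls_ar C (cid C X) (cid C Y) = cid C (pls C X Y)"
  using parsummable unfolding is_parsummable_def by (elim conjE) simp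

lemma pls_ar_hom:
  "f \<in> hom C X X' \<Longrightarrow> g \<in> hom C Y Y' \<Longrightarrow> dsj C X Y \<Longrightarrow> dsj C X' Y' \<Longrightarrow>
    pls_ar C f g \<in> hom C (pls C X Y) (pls C X' Y')"
  using parsummable unfolding is_parsummable_def hom_def by (elim conjE) simp

lemma pls_ar_comp:
  "f \<in> hom C X X' \<Longrightarrow> f' \<in> hom C X' X'' \<Longrightarrow> g \<in> hom C Y Y' \<Longrightarrow> g' \<in> hom C Y' Y'' \<Longrightarrow>
    dsj C X Y \<Longrightarrow> dsj C X' Y' \<Longrightarrow> dsj C X'' Y'' \<Longrightarrow>
    pls_ar C (ccomp C f' f) (ccomp C g' g) = ccomp C (pls_ar C f' g') (pls_ar C f g)"
  using parsummable unfolding is_parsummable_def hom_def by (elim conjE) simp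

lemma supports_pls:
  assumes "X \<in> obj C" "Y \<in> obj C" "supports C A X" "supports C B Y" "dsj C X Y"
  shows "supports C (A \<union> B) (pls C X Y)"
  using assms act_pls by (auto simp: supports_def fixes_pw_def Minj_def)

end

section \<open>Sums of disjointly supported families\<close>

definition disj_supported ::
    "('o,'a,'z) pscat_scheme \<Rightarrow> (nat \<Rightarrow> 'o) \<Rightarrow> (nat \<Rightarrow> nat set) \<Rightarrow> nat list \<Rightarrow> bool" where
  "disj_supported C X A ks \<longleftrightarrow> distinct ks \<and>
     (\<forall>k\<in>set ks. X k \<in> obj C \<and> supports C (A k) (X k)) \<and>
     (\<forall>k\<in>set ks. \<forall>k'\<in>set ks. k \<noteq> k' \<longrightarrow> A k \<inter> A k' = {})"

lemma disj_supported_ConsD: "disj_supported C X A (k # ks) \<Longrightarrow> disj_supported C X A ks"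
  unfolding disj_supported_def by auto

context parsummable_category
begin

lemma lsum_obj_supp:
  assumes "disj_supported C X A ks"
  shows "lsum C (map X ks) \<in> obj C \<and> supp C (lsum C (map X ks)) \<subseteq> (\<Union>k\<in>set ks. A k)"
proof -
  \<comment> \<open>Only nonempty sums are supported by the union: for the empty sum we merely know
      that \<open>supp C (zer C) = {}\<close>.\<close>
  have "lsum C (map X ks) \<in> obj C \<and> supp C (lsum C (map X ks)) \<subseteq> (\<Union>k\<in>set ks. A k) \<and>
      (ks \<noteq> [] \<longrightarrow> supports C (\<Union>k\<in>set ks. A k) (lsum C (map X ks)))"
    using assms
  proof (induction ks)
    case Nil
    then show ?case by (simp add: lsum_def zer_obj supp_zer)
  next
    case (Cons k ks)
    let ?R = "lsum C (map X ks)"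
    have R: "?R \<in> obj C" "supp C ?R \<subseteq> (\<Union>k\<in>set ks. A k)"
      "ks \<noteq> [] \<longrightarrow> supports C (\<Union>k\<in>set ks. A k) ?R"
      using Cons disj_supported_ConsD by blast+
    have Xk: "X k \<in> obj C" "supports C (A k) (X k)"
      using Cons.prems by (auto simp: disj_supported_def)
    have "A k \<inter> (\<Union>k\<in>set ks. A k) = {}"
      using Cons.prems by (auto simp: disj_supported_def)
    then have dsj: "dsj C (X k) ?R" by (rule dsj_if_supports[OF Xk(2) R(2)])
    have sum: "lsum C (map X (k # ks)) = pls C (X k) ?R" by (simp add: lsum_def)
    show ?case
    proof (cases "ks = []")
      case True
      then show ?thesis
        using sum Xk pls_zer supp_subset_if_supports by (simp add: lsum_def)
    next
      case False
      then have "supports C (A k \<union> (\<Union>k\<in>set ks. A k)) (pls C (X k) ?R)"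
        using supports_pls[OF Xk(1) R(1) Xk(2)] R(3) dsj by blast
      then show ?thesis
        using sum pls_obj[OF Xk(1) R(1) dsj] supp_subset_if_supports by simp
    qed
  qed
  then show ?thesis by blast
qed

lemma disj_supported_Cons_dsj:
  assumes "disj_supported C X A (k # ks)"
  shows "X k \<in> obj C" "lsum C (map X ks) \<in> obj C" "dsj C (X k) (lsum C (map X ks))"
proof -
  have R: "lsum C (map X ks) \<in> obj C" "supp C (lsum C (map X ks)) \<subseteq> (\<Union>k\<in>set ks. A k)"
    using lsum_obj_supp disj_supported_ConsD[OF assms] by blast+
  have Xk: "X k \<in> obj C" "supports C (A k) (X k)"
    using assms by (auto simp: disj_supported_def)
  have "A k \<inter> (\<Union>k\<in>set ks. A k) = {}"
    using assms by (auto simp: disj_supported_def)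
  then show "dsj C (X k) (lsum C (map X ks))" by (rule dsj_if_supports[OF Xk(2) R(2)])
  show "X k \<in> obj C" "lsum C (map X ks) \<in> obj C" using Xk R by auto
qed

lemma lsum_ar_hom:
  assumes "disj_supported C X A ks" "disj_supported C Y B ks"
    and "\<forall>k\<in>set ks. f k \<in> hom C (X k) (Y k)"
  shows "lsum_ar C (map f ks) \<in> hom C (lsum C (map X ks)) (lsum C (map Y ks))"
  using assms
proof (induction ks)
  case Nil
  then show ?case by (simp add: lsum_def lsum_ar_def cat_cid_hom[OF cat] zer_obj)
next
  case (Cons k ks)
  have "lsum_ar C (map f ks) \<in> hom C (lsum C (map X ks)) (lsum C (map Y ks))"
    using Cons.IH Cons.prems(1,2)[THEN disj_supported_ConsD] Cons.prems(3) by simp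
  then show ?case
    using pls_ar_hom disj_supported_Cons_dsj(3)[OF Cons.prems(1)]
      disj_supported_Cons_dsj(3)[OF Cons.prems(2)] Cons.prems(3)
    by (simp add: lsum_def lsum_ar_def)
qed

lemma lsum_ar_comp:
  assumes "disj_supported C X A ks" "disj_supported C Y B ks" "disj_supported C Z E ks"
    and "\<forall>k\<in>set ks. f k \<in> hom C (X k) (Y k)" "\<forall>k\<in>set ks. g k \<in> hom C (Y k) (Z k)"
  shows "ccomp C (lsum_ar C (map g ks)) (lsum_ar C (map f ks)) =
    lsum_ar C (map (\<lambda>k. ccomp C (g k) (f k)) ks)"
  using assms
proof (induction ks)
  case Nil
  then show ?case
    by (simp add: lsum_def lsum_ar_def cat_cid_left[OF cat cat_cid_hom[OF cat zer_obj]])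
next
  case (Cons k ks)
  note tails = Cons.prems(1-3)[THEN disj_supported_ConsD]
  have "ccomp C (lsum_ar C (map g (k # ks))) (lsum_ar C (map f (k # ks))) =
      pls_ar C (ccomp C (g k) (f k)) (ccomp C (lsum_ar C (map g ks)) (lsum_ar C (map f ks)))"
    unfolding lsum_ar_def list.map foldr.simps comp_def
    by (rule pls_ar_comp[symmetric, OF _ _ lsum_ar_hom[OF tails(1,2)] lsum_ar_hom[OF tails(2,3)]
          Cons.prems(1-3)[THEN disj_supported_Cons_dsj(3)], unfolded lsum_ar_def])
      (use Cons.prems in auto)
  then show ?case using Cons tails by (simp add: lsum_ar_def)
qed

lemma lsum_ar_cid:
  assumes "disj_supported C X A ks"
  shows "lsum_ar C (map (\<lambda>k. cid C (X k)) ks) = cid C (lsum C (map X ks))"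
  using assms
proof (induction ks)
  case Nil
  then show ?case by (simp add: lsum_def lsum_ar_def)
next
  case (Cons k ks)
  then show ?case
    using pls_ar_cid[OF disj_supported_Cons_dsj[OF Cons.prems]] Cons.IH[OF disj_supported_ConsD]
    by (simp add: lsum_def lsum_ar_def)
qed

lemma psmor_lsum:
  assumes F: "is_psmor C D Fo Fa" and X: "disj_supported C X A ks"
  shows "Fo (lsum C (map X ks)) = lsum D (map (\<lambda>k. Fo (X k)) ks)"
  using X
proof (induction ks)
  case Nil
  then show ?case using psmor_zer[OF F] by (simp add: lsum_def)
next
  case (Cons k ks)
  have "Fo (pls C (X k) (lsum C (map X ks))) = pls D (Fo (X k)) (Fo (lsum C (map X ks)))"
    using psmor_pls[OF F disj_supported_Cons_dsj[OF Cons.prems]] .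
  then show ?case using Cons.IH[OF disj_supported_ConsD[OF Cons.prems]] by (simp add: lsum_def)
qed

end

section \<open>The objects \<open>\<phi>\<^sub>*(X\<^sub>\<bullet>)\<close> and the isomorphisms \<open>[\<phi>',\<phi>]\<close>\<close>

lemma injm_inj: "injm m phi \<Longrightarrow> k < m \<Longrightarrow> inj (phi k)"
  unfolding injm_def inj_on_def inj_def by auto

lemma injm_disjoint_images:
  assumes "injm m phi" "k < m" "k' < m" "k \<noteq> k'"
  shows "phi k ` S \<inter> phi k' ` S' = {}"
proof -
  have "phi k a \<noteq> phi k' b" for a b
    using assms unfolding injm_def inj_on_def
    by (metis (no_types, lifting) UNIV_I case_prod_conv lessThan_iff mem_Sigma_iff prod.inject)
  then show ?thesis by blast
qed

context parsummable_category
begin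

lemma disj_supported_phis:
  assumes Xs: "set Xs \<subseteq> obj C" and phi: "injm (length Xs) phi"
  shows "disj_supported C (\<lambda>k. act C (phi k) (Xs ! k)) (\<lambda>k. phi k ` some_support C (Xs ! k))
      [0..<length Xs]"
  unfolding disj_supported_def
proof (intro conjI ballI impI)
  fix k assume "k \<in> set [0..<length Xs]"
  then have k: "k < length Xs" "Xs ! k \<in> obj C" using Xs by auto
  show "act C (phi k) (Xs ! k) \<in> obj C"
    using act_obj[OF injm_inj[OF phi k(1)] k(2)] .
  show "supports C (phi k ` some_support C (Xs ! k)) (act C (phi k) (Xs ! k))"
    using supports_act[OF k(2) supports_some_support[OF obj_fin_supp[OF k(2)]] injm_inj[OF phi k(1)]] .
  fix k' assume "k' \<in> set [0..<length Xs]" "k \<noteq> k'"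
  then show "phi k ` some_support C (Xs ! k) \<inter> phi k' ` some_support C (Xs ! k') = {}"
    using injm_disjoint_images[OF phi k(1)] by simp
qed simp

lemma phis_obj: "set Xs \<subseteq> obj C \<Longrightarrow> injm (length Xs) phi \<Longrightarrow> phis C phi Xs \<in> obj C"
  unfolding phis_def using lsum_obj_supp[OF disj_supported_phis] by blast

lemma brk_nth_hom:
  assumes Xs: "set Xs \<subseteq> obj C" and phi: "injm (length Xs) phi" "injm (length Xs) phi'"
  shows "\<forall>k\<in>set [0..<length Xs]. brk C (phi' k) (phi k) (Xs ! k)
      \<in> hom C (act C (phi k) (Xs ! k)) (act C (phi' k) (Xs ! k))"
proof
  fix k assume "k \<in> set [0..<length Xs]"
  then have k: "k < length Xs" "Xs ! k \<in> obj C" using Xs by auto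
  show "brk C (phi' k) (phi k) (Xs ! k) \<in> hom C (act C (phi k) (Xs ! k)) (act C (phi' k) (Xs ! k))"
    using brk_hom[OF injm_inj[OF phi(1) k(1)] injm_inj[OF phi(2) k(1)] k(2)] .
qed

lemma brks_hom:
  assumes "set Xs \<subseteq> obj C" "injm (length Xs) phi" "injm (length Xs) phi'"
  shows "brks C phi' phi Xs \<in> hom C (phis C phi Xs) (phis C phi' Xs)"
  unfolding brks_def phis_def
  using lsum_ar_hom[OF disj_supported_phis disj_supported_phis brk_nth_hom] assms by blast

lemma brks_comp:
  assumes Xs: "set Xs \<subseteq> obj C"
    and phi: "injm (length Xs) phi" "injm (length Xs) phi'" "injm (length Xs) phi''"
  shows "ccomp C (brks C phi'' phi' Xs) (brks C phi' phi Xs) = brks C phi'' phi Xs"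
proof -
  have "ccomp C (brks C phi'' phi' Xs) (brks C phi' phi Xs) =
      lsum_ar C (map (\<lambda>k. ccomp C (brk C (phi'' k) (phi' k) (Xs ! k)) (brk C (phi' k) (phi k) (Xs ! k)))
        [0..<length Xs])"
    unfolding brks_def
    by (rule lsum_ar_comp[OF disj_supported_phis disj_supported_phis disj_supported_phis
          brk_nth_hom brk_nth_hom]) (use assms in auto)
  also have "\<dots> = brks C phi'' phi Xs"
    unfolding brks_def
  proof (intro arg_cong[where f="lsum_ar C"] map_cong[OF refl])
    fix k assume "k \<in> set [0..<length Xs]"
    then have k: "k < length Xs" "Xs ! k \<in> obj C" using Xs by auto
    show "ccomp C (brk C (phi'' k) (phi' k) (Xs ! k)) (brk C (phi' k) (phi k) (Xs ! k)) =
        brk C (phi'' k) (phi k) (Xs ! k)"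
      using brk_comp[OF injm_inj[OF phi(1) k(1)] injm_inj[OF phi(2) k(1)] injm_inj[OF phi(3) k(1)] k(2)] .
  qed
  finally show ?thesis .
qed

lemma brks_refl:
  assumes Xs: "set Xs \<subseteq> obj C" and phi: "injm (length Xs) phi"
  shows "brks C phi phi Xs = cid C (phis C phi Xs)"
proof -
  have "brks C phi phi Xs = lsum_ar C (map (\<lambda>k. cid C (act C (phi k) (Xs ! k))) [0..<length Xs])"
    unfolding brks_def
  proof (intro arg_cong[where f="lsum_ar C"] map_cong[OF refl])
    fix k assume "k \<in> set [0..<length Xs]"
    then have k: "k < length Xs" "Xs ! k \<in> obj C" using Xs by auto
    show "brk C (phi k) (phi k) (Xs ! k) = cid C (act C (phi k) (Xs ! k))"
      using brk_refl[OF injm_inj[OF phi k(1)] k(2)] .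
  qed
  also have "\<dots> = cid C (phis C phi Xs)"
    unfolding phis_def by (rule lsum_ar_cid[OF disj_supported_phis[OF Xs phi]])
  finally show ?thesis .
qed

lemma psmor_phis:
  assumes F: "is_psmor C D Fo Fa" and Xs: "set Xs \<subseteq> obj C" and phi: "injm (length Xs) phi"
  shows "Fo (phis C phi Xs) = phis D phi (map Fo Xs)"
proof -
  have "Fo (phis C phi Xs) = lsum D (map (\<lambda>k. Fo (act C (phi k) (Xs ! k))) [0..<length Xs])"
    unfolding phis_def by (rule psmor_lsum[OF F disj_supported_phis[OF Xs phi]])
  also have "\<dots> = phis D phi (map Fo Xs)"
    unfolding phis_def length_map
  proof (intro arg_cong[where f="lsum D"] map_cong[OF refl])
    fix k assume "k \<in> set [0..<length Xs]"
    then have k: "k < length Xs" "Xs ! k \<in> obj C" using Xs by auto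
    show "Fo (act C (phi k) (Xs ! k)) = act D (phi k) (map Fo Xs ! k)"
      using psmor_act[OF F injm_inj[OF phi k(1)] k(2)] k(1) by simp
  qed
  finally show ?thesis .
qed

end

section \<open>Morphism classes of \<open>\<Sigma>(C)\<close>\<close>

lemma mem_sig_cls_iff:
  "(psi', f', phi') \<in> sig_cls C Xs Ys (psi, f, phi) \<longleftrightarrow>
     injm (length Xs) phi' \<and> injm (length Ys) psi' \<and>
     f' = ccomp C (brks C psi' psi Ys) (ccomp C f (brks C phi phi' Xs))"
  unfolding sig_cls_def by auto

lemma injm_pe: "injm m pe"
  unfolding injm_def pe_def inj_on_def by (auto simp: prod_encode_eq)

context parsummable_category
begin

context
  fixes Xs Ys :: "'o list"
  assumes Xs: "set Xs \<subseteq> obj C" and Ys: "set Ys \<subseteq> obj C"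
begin

lemma sig_trip_if_mem_sig_cls:
  assumes t: "sig_trip C Xs Ys (psi, f, phi)" and mem: "(psi', f', phi') \<in> sig_cls C Xs Ys (psi, f, phi)"
  shows "sig_trip C Xs Ys (psi', f', phi')"
proof -
  have t: "injm (length Xs) phi" "injm (length Ys) psi" "f \<in> hom C (phis C phi Xs) (phis C psi Ys)"
    using t by (auto simp: sig_trip_def)
  have mem: "injm (length Xs) phi'" "injm (length Ys) psi'"
    "f' = ccomp C (brks C psi' psi Ys) (ccomp C f (brks C phi phi' Xs))"
    using mem by (auto simp: mem_sig_cls_iff)
  have "f' \<in> hom C (phis C phi' Xs) (phis C psi' Ys)"
    unfolding mem(3)
    by (rule cat_comp_hom[OF cat cat_comp_hom[OF cat brks_hom[OF Xs mem(1) t(1)] t(3)]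
          brks_hom[OF Ys t(2) mem(2)]])
  then show ?thesis using mem by (simp add: sig_trip_def)
qed

lemma mem_sig_cls_self:
  assumes "sig_trip C Xs Ys (psi, f, phi)"
  shows "(psi, f, phi) \<in> sig_cls C Xs Ys (psi, f, phi)"
proof -
  have t: "injm (length Xs) phi" "injm (length Ys) psi" "f \<in> hom C (phis C phi Xs) (phis C psi Ys)"
    using assms by (auto simp: sig_trip_def)
  then show ?thesis
    using brks_refl[OF Xs t(1)] brks_refl[OF Ys t(2)] cat_cid_left[OF cat t(3)] cat_cid_right[OF cat t(3)]
    by (simp add: mem_sig_cls_iff)
qed

lemma sig_cls_eq_if_mem:
  assumes t: "sig_trip C Xs Ys (psi, f, phi)" and mem: "(psi1, f1, phi1) \<in> sig_cls C Xs Ys (psi, f, phi)"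
  shows "sig_cls C Xs Ys (psi1, f1, phi1) = sig_cls C Xs Ys (psi, f, phi)"
proof -
  have t: "injm (length Xs) phi" "injm (length Ys) psi" "f \<in> hom C (phis C phi Xs) (phis C psi Ys)"
    using t by (auto simp: sig_trip_def)
  have mem: "injm (length Xs) phi1" "injm (length Ys) psi1"
    "f1 = ccomp C (brks C psi1 psi Ys) (ccomp C f (brks C phi phi1 Xs))"
    using mem by (auto simp: mem_sig_cls_iff)
  have "ccomp C (brks C psi' psi1 Ys) (ccomp C f1 (brks C phi1 phi' Xs)) =
      ccomp C (brks C psi' psi Ys) (ccomp C f (brks C phi phi' Xs))"
    if phi': "injm (length Xs) phi'" and psi': "injm (length Ys) psi'" for psi' phi'
  proof -
    note h1 = brks_hom[OF Xs phi' mem(1)] and h2 = brks_hom[OF Xs mem(1) t(1)]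
      and h3 = brks_hom[OF Ys t(2) mem(2)] and h4 = brks_hom[OF Ys mem(2) psi']
    have "ccomp C f1 (brks C phi1 phi' Xs) =
        ccomp C (brks C psi1 psi Ys) (ccomp C (ccomp C f (brks C phi phi1 Xs)) (brks C phi1 phi' Xs))"
      unfolding mem(3) by (rule cat_comp_assoc[OF cat h1 cat_comp_hom[OF cat h2 t(3)] h3, symmetric])
    also have "ccomp C (ccomp C f (brks C phi phi1 Xs)) (brks C phi1 phi' Xs) = ccomp C f (brks C phi phi' Xs)"
      using cat_comp_assoc[OF cat h1 h2 t(3), symmetric] brks_comp[OF Xs phi' mem(1) t(1)] by simp
    finally have "ccomp C f1 (brks C phi1 phi' Xs) = ccomp C (brks C psi1 psi Ys) (ccomp C f (brks C phi phi' Xs))" .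
    moreover have "ccomp C f (brks C phi phi' Xs) \<in> hom C (phis C phi' Xs) (phis C psi Ys)"
      by (rule cat_comp_hom[OF cat brks_hom[OF Xs phi' t(1)] t(3)])
    ultimately show ?thesis
      using cat_comp_assoc[OF cat _ h3 h4] brks_comp[OF Ys t(2) mem(2) psi'] by simp
  qed
  then show ?thesis
    by (auto simp: sig_cls_def)
qed

end

lemma is_sig_cls_rep:
  assumes "is_sig_cls C Xs Ys c"
  shows "rep c \<in> c" "sig_trip C Xs Ys (rep c)" "c = sig_cls C Xs Ys (rep c)"
proof -
  have Xs: "set Xs \<subseteq> obj C" and Ys: "set Ys \<subseteq> obj C"
    using assms by (auto simp: is_sig_cls_def)
  obtain psi f phi where t: "sig_trip C Xs Ys (psi, f, phi)" and c: "c = sig_cls C Xs Ys (psi, f, phi)"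
    using assms by (auto simp: is_sig_cls_def)
  show "rep c \<in> c"
    using mem_sig_cls_self[OF Xs Ys t] unfolding rep_def c by (rule someI)
  then obtain psi' f' phi' where r: "rep c = (psi', f', phi')" "(psi', f', phi') \<in> sig_cls C Xs Ys (psi, f, phi)"
    using c by (cases "rep c") auto
  show "sig_trip C Xs Ys (rep c)"
    using sig_trip_if_mem_sig_cls[OF Xs Ys t r(2)] r(1) by simp
  show "c = sig_cls C Xs Ys (rep c)"
    using sig_cls_eq_if_mem[OF Xs Ys t r(2)] r(1) c by simp
qed

lemma is_sig_cls_sig_idc: "set Xs \<subseteq> obj C \<Longrightarrow> is_sig_cls C Xs Xs (sig_idc C Xs)"
  unfolding is_sig_cls_def sig_idc_def sig_trip_def
  using injm_pe cat_cid_hom[OF cat phis_obj[OF _ injm_pe]] by blast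

lemma rep_sig_idc:
  assumes Xs: "set Xs \<subseteq> obj C"
  obtains psi phi where "rep (sig_idc C Xs) = (psi, brks C psi phi Xs, phi)"
    "injm (length Xs) psi" "injm (length Xs) phi"
proof -
  obtain psi f phi where r: "rep (sig_idc C Xs) = (psi, f, phi)"
    by (cases "rep (sig_idc C Xs)") auto
  have "(psi, f, phi) \<in> sig_idc C Xs"
    using is_sig_cls_rep(1)[OF is_sig_cls_sig_idc[OF Xs]] r by simp
  then have m: "injm (length Xs) phi" "injm (length Xs) psi"
    "f = ccomp C (brks C psi pe Xs) (ccomp C (cid C (phis C pe Xs)) (brks C pe phi Xs))"
    unfolding sig_idc_def mem_sig_cls_iff by auto
  have "f = brks C psi phi Xs"
    unfolding m(3) cat_cid_left[OF cat brks_hom[OF Xs m(1) injm_pe]] brks_comp[OF Xs m(1) injm_pe m(2)] ..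
  then show ?thesis using that r m by simp
qed

lemma sig_comp_sig_idc_left:
  assumes c: "is_sig_cls C Xs Ys c"
  shows "sig_comp C Xs Ys Ys (sig_idc C Ys) c = c"
proof -
  have Xs: "set Xs \<subseteq> obj C" and Ys: "set Ys \<subseteq> obj C"
    using c by (auto simp: is_sig_cls_def)
  obtain psi f phi where r: "rep c = (psi, f, phi)" by (cases "rep c") auto
  have tr: "sig_trip C Xs Ys (psi, f, phi)" and cr: "c = sig_cls C Xs Ys (psi, f, phi)"
    using is_sig_cls_rep(2,3)[OF c] r by simp_all
  then have t: "injm (length Xs) phi" "injm (length Ys) psi" "f \<in> hom C (phis C phi Xs) (phis C psi Ys)"
    by (auto simp: sig_trip_def)
  obtain rho theta where ri: "rep (sig_idc C Ys) = (rho, brks C rho theta Ys, theta)"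
    "injm (length Ys) rho" "injm (length Ys) theta"
    using rep_sig_idc[OF Ys] by blast
  have "ccomp C (brks C rho theta Ys) (ccomp C (brks C theta psi Ys) f) = ccomp C (brks C rho psi Ys) f"
    using cat_comp_assoc[OF cat t(3) brks_hom[OF Ys t(2) ri(3)] brks_hom[OF Ys ri(3) ri(2)]]
      brks_comp[OF Ys t(2) ri(3) ri(2)] by simp
  then have "sig_comp C Xs Ys Ys (sig_idc C Ys) c = sig_cls C Xs Ys (rho, ccomp C (brks C rho psi Ys) f, phi)"
    unfolding sig_comp_def r ri(1) by simp
  also have "\<dots> = c"
  proof -
    have "(rho, ccomp C (brks C rho psi Ys) f, phi) \<in> sig_cls C Xs Ys (psi, f, phi)"
      using t ri brks_refl[OF Xs t(1)] cat_cid_right[OF cat t(3)] by (simp add: mem_sig_cls_iff)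
    then show ?thesis using sig_cls_eq_if_mem[OF Xs Ys tr] cr by simp
  qed
  finally show ?thesis .
qed

lemma sig_comp_sig_idc_right:
  assumes c: "is_sig_cls C Xs Ys c"
  shows "sig_comp C Xs Xs Ys c (sig_idc C Xs) = c"
proof -
  have Xs: "set Xs \<subseteq> obj C" and Ys: "set Ys \<subseteq> obj C"
    using c by (auto simp: is_sig_cls_def)
  obtain rho g theta where r: "rep c = (rho, g, theta)" by (cases "rep c") auto
  have tr: "sig_trip C Xs Ys (rho, g, theta)" and cr: "c = sig_cls C Xs Ys (rho, g, theta)"
    using is_sig_cls_rep(2,3)[OF c] r by simp_all
  then have t: "injm (length Xs) theta" "injm (length Ys) rho" "g \<in> hom C (phis C theta Xs) (phis C rho Ys)"
    by (auto simp: sig_trip_def)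
  obtain psi phi where ri: "rep (sig_idc C Xs) = (psi, brks C psi phi Xs, phi)"
    "injm (length Xs) psi" "injm (length Xs) phi"
    using rep_sig_idc[OF Xs] by blast
  have "sig_comp C Xs Xs Ys c (sig_idc C Xs) = sig_cls C Xs Ys (rho, ccomp C g (brks C theta phi Xs), phi)"
    unfolding sig_comp_def r ri(1) using brks_comp[OF Xs ri(3) ri(2) t(1)] by simp
  also have "\<dots> = c"
  proof -
    have "(rho, ccomp C g (brks C theta phi Xs), phi) \<in> sig_cls C Xs Ys (rho, g, theta)"
      using t ri brks_refl[OF Ys t(2)] cat_cid_left[OF cat cat_comp_hom[OF cat brks_hom[OF Xs ri(3) t(1)] t(3)]]
      by (simp add: mem_sig_cls_iff)
    then show ?thesis using sig_cls_eq_if_mem[OF Xs Ys tr] cr by simp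
  qed
  finally show ?thesis .
qed

end

section \<open>The equivalence \<open>\<Theta>(C) \<simeq> \<Phi>\<Sigma>(C)\<close>\<close>

lemma Theta_simps:
  "obj (Theta C) = ThetaOb C"
  "arr (Theta C) = {a \<in> PhiAr C. fst a \<in> ThetaOb C \<and> fst (snd a) \<in> ThetaOb C}"
  "cdom (Theta C) = fst" "ccod (Theta C) = (\<lambda>a. fst (snd a))" "cid (Theta C) = phi_id C"
  "ccomp (Theta C) = phi_comp C" "act (Theta C) = phi_act" "act_ar (Theta C) = phi_act_ar C"
  "brk (Theta C) = phi_brk C" "zer (Theta C) = (\<lambda>_. [])" "pls (Theta C) = phi_pls"
  "pls_ar (Theta C) = phi_pls_ar C"
  by (simp_all add: Theta_def PhiSig_def)

lemma PhiSig_simps: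
  "obj (PhiSig C) = PhiOb C" "arr (PhiSig C) = PhiAr C"
  "cdom (PhiSig C) = fst" "ccod (PhiSig C) = (\<lambda>a. fst (snd a))" "cid (PhiSig C) = phi_id C"
  "ccomp (PhiSig C) = phi_comp C" "act (PhiSig C) = phi_act" "act_ar (PhiSig C) = phi_act_ar C"
  "brk (PhiSig C) = phi_brk C" "zer (PhiSig C) = (\<lambda>_. [])" "pls (PhiSig C) = phi_pls"
  "pls_ar (PhiSig C) = phi_pls_ar C"
  by (simp_all add: PhiSig_def)

lemma ThetaOb_subset_PhiOb: "ThetaOb C \<subseteq> PhiOb C"
  by (auto simp: ThetaOb_def)

lemma dsj_Theta: "dsj (Theta C) = dsj (PhiSig C)"
  unfolding dsj_def[abs_def] supp_def Theta_simps PhiSig_simps ..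

lemma functor_Theta_incl: "is_functor (Theta C) (PhiSig C) id id"
  unfolding is_functor_def hom_def Theta_simps PhiSig_simps using ThetaOb_subset_PhiOb by auto

lemma psmor_Theta_incl: "is_psmor (Theta C) (PhiSig C) id id"
  unfolding is_psmor_def using functor_Theta_incl by (simp add: Theta_simps PhiSig_simps dsj_Theta)

lemma set_catP_subset: "P \<in> PhiOb C \<Longrightarrow> set (catP P) \<subseteq> obj C"
  unfolding PhiOb_def catP_def by auto

lemma PhiAr_is_sig_cls: "a \<in> PhiAr C \<Longrightarrow> is_sig_cls C (catP (fst a)) (catP (fst (snd a))) (snd (snd a))"
  unfolding PhiAr_def by auto

definition flat :: "'o pobj \<Rightarrow> 'o pobj" where
  "flat P = (\<lambda>i. if i < length (catP P) then [catP P ! i] else [])"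

definition flat_ar :: "('o,'a) parr \<Rightarrow> ('o,'a) parr" where
  "flat_ar a = (flat (fst a), flat (fst (snd a)), snd (snd a))"

lemma bnd_flat: "bnd (flat P) = length (catP P)"
  unfolding bnd_def
proof (rule Least_equality)
  show "\<forall>i\<ge>length (catP P). flat P i = []" by (simp add: flat_def)
  fix N assume "\<forall>i\<ge>N. flat P i = []"
  then show "length (catP P) \<le> N" by (metis flat_def not_Cons_self2 not_le order_refl)
qed

lemma catP_flat: "catP (flat P) = catP P"
proof -
  have "catP (flat P) = concat (map (\<lambda>i. [catP P ! i]) [0..<length (catP P)])"
    unfolding catP_def[of "flat P"] bnd_flat by (rule arg_cong[where f=concat]) (auto simp: flat_def)
  then show ?thesis by (simp add: map_nth)
qed

lemma flat_ThetaOb: "set (catP P) \<subseteq> obj C \<Longrightarrow> flat P \<in> ThetaOb C"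
proof -
  assume P: "set (catP P) \<subseteq> obj C"
  have "finite {i. flat P i \<noteq> []}"
    by (rule finite_subset[of _ "{..<length (catP P)}"]) (auto simp: flat_def split: if_splits)
  moreover have "set (flat P i) \<subseteq> obj C" for i using P by (auto simp: flat_def)
  ultimately show ?thesis by (auto simp: ThetaOb_def PhiOb_def flat_def)
qed

lemma functor_flat: "is_functor (PhiSig C) (Theta C) flat flat_ar"
  unfolding is_functor_def hom_def Theta_simps PhiSig_simps
proof (intro conjI ballI impI)
  fix P assume "P \<in> PhiOb C"
  then show "flat P \<in> ThetaOb C" by (rule flat_ThetaOb[OF set_catP_subset])
next
  fix a assume a: "a \<in> PhiAr C"
  then have "flat (fst a) \<in> ThetaOb C" "flat (fst (snd a)) \<in> ThetaOb C"
    by (auto simp: PhiAr_def intro: flat_ThetaOb[OF set_catP_subset])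
  then show "flat_ar a \<in> {b \<in> {a \<in> PhiAr C. fst a \<in> ThetaOb C \<and> fst (snd a) \<in> ThetaOb C}.
      fst b = flat (fst a) \<and> fst (snd b) = flat (fst (snd a))}"
    using a ThetaOb_subset_PhiOb by (auto simp: flat_ar_def PhiAr_def catP_flat)
qed (simp_all add: flat_ar_def phi_id_def phi_comp_def catP_flat)

context parsummable_category
begin

lemma sig_idc_PhiAr:
  "P \<in> PhiOb C \<Longrightarrow> Q \<in> PhiOb C \<Longrightarrow> catP P = catP Q \<Longrightarrow> (P, Q, sig_idc C (catP P)) \<in> PhiAr C"
  unfolding PhiAr_def using is_sig_cls_sig_idc[OF set_catP_subset] by simp

lemma phi_comp_sig_idc:
  assumes "P \<in> PhiOb C" "catP P = catP Q"
  shows "phi_comp C (Q, P, sig_idc C (catP Q)) (P, Q, sig_idc C (catP P)) = phi_id C P"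
proof -
  have "sig_comp C (catP P) (catP P) (catP P) (sig_idc C (catP P)) (sig_idc C (catP P)) = sig_idc C (catP P)"
    by (rule sig_comp_sig_idc_left[OF is_sig_cls_sig_idc[OF set_catP_subset[OF assms(1)]]])
  then show ?thesis using assms(2)[symmetric] by (simp add: phi_comp_def phi_id_def)
qed

lemma iso_flat_Theta:
  assumes P: "P \<in> ThetaOb C"
  shows "(P, flat P, sig_idc C (catP P)) \<in> hom (Theta C) P (flat P)"
    "is_iso (Theta C) (P, flat P, sig_idc C (catP P))"
proof -
  have PP: "P \<in> PhiOb C" using P ThetaOb_subset_PhiOb by blast
  have fP: "flat P \<in> ThetaOb C" by (rule flat_ThetaOb[OF set_catP_subset[OF PP]])
  then have fPP: "flat P \<in> PhiOb C" using ThetaOb_subset_PhiOb by blast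
  note arrs = sig_idc_PhiAr[OF PP fPP catP_flat[symmetric]] sig_idc_PhiAr[OF fPP PP catP_flat]
  note comps = phi_comp_sig_idc[OF PP catP_flat[symmetric]] phi_comp_sig_idc[OF fPP catP_flat]
  show "(P, flat P, sig_idc C (catP P)) \<in> hom (Theta C) P (flat P)"
    using arrs P fP by (simp add: hom_def Theta_simps)
  show "is_iso (Theta C) (P, flat P, sig_idc C (catP P))"
    unfolding is_iso_def hom_def Theta_simps
    using arrs comps P fP by (auto simp: catP_flat intro!: bexI[of _ "(flat P, P, sig_idc C (catP P))"])
qed

lemma iso_flat_PhiSig:
  assumes P: "P \<in> PhiOb C"
  shows "(flat P, P, sig_idc C (catP P)) \<in> hom (PhiSig C) (flat P) P"
    "is_iso (PhiSig C) (flat P, P, sig_idc C (catP P))"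
proof -
  have fP: "flat P \<in> PhiOb C"
    using flat_ThetaOb[OF set_catP_subset[OF P]] ThetaOb_subset_PhiOb by blast
  note arrs = sig_idc_PhiAr[OF P fP catP_flat[symmetric]] sig_idc_PhiAr[OF fP P catP_flat]
  note comps = phi_comp_sig_idc[OF P catP_flat[symmetric]] phi_comp_sig_idc[OF fP catP_flat]
  show "(flat P, P, sig_idc C (catP P)) \<in> hom (PhiSig C) (flat P) P"
    using arrs by (simp add: hom_def PhiSig_simps catP_flat)
  show "is_iso (PhiSig C) (flat P, P, sig_idc C (catP P))"
    unfolding is_iso_def hom_def PhiSig_simps
    using arrs comps by (auto simp: catP_flat intro!: bexI[of _ "(P, flat P, sig_idc C (catP P))"])
qed

lemma phi_comp_sig_idc_natural:
  assumes "a \<in> PhiAr C"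
  shows "phi_comp C (fst (snd a), flat (fst (snd a)), sig_idc C (catP (fst (snd a)))) a =
      phi_comp C (flat_ar a) (fst a, flat (fst a), sig_idc C (catP (fst a)))"
    "phi_comp C (flat (fst (snd a)), fst (snd a), sig_idc C (catP (fst (snd a)))) (flat_ar a) =
      phi_comp C a (flat (fst a), fst a, sig_idc C (catP (fst a)))"
  using sig_comp_sig_idc_left[OF PhiAr_is_sig_cls[OF assms]] sig_comp_sig_idc_right[OF PhiAr_is_sig_cls[OF assms]]
  by (simp_all add: phi_comp_def flat_ar_def catP_flat)

lemma Theta_equiv_PhiSig: "cat_equiv (Theta C) (PhiSig C) id id"
  unfolding cat_equiv_def
proof (intro conjI exI)
  show "is_functor (Theta C) (PhiSig C) id id" by (rule functor_Theta_incl)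
  show "is_functor (PhiSig C) (Theta C) flat flat_ar" by (rule functor_flat)
  show "nat_iso (Theta C) (Theta C) id id (flat \<circ> id) (flat_ar \<circ> id)
      (\<lambda>P. (P, flat P, sig_idc C (catP P)))"
    unfolding nat_iso_def using iso_flat_Theta phi_comp_sig_idc_natural(1) by (auto simp: Theta_simps)
  show "nat_iso (PhiSig C) (PhiSig C) (id \<circ> flat) (id \<circ> flat_ar) id id
      (\<lambda>P. (flat P, P, sig_idc C (catP P)))"
    unfolding nat_iso_def using iso_flat_PhiSig phi_comp_sig_idc_natural(2) by (auto simp: PhiSig_simps)
qed

end

section \<open>Naturality\<close>

lemma catP_PS_ob: "catP (PS_ob Fo P) = map Fo (catP P)"
proof -
  have "bnd (PS_ob Fo P) = bnd P" unfolding bnd_def PS_ob_def by simp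
  then show ?thesis unfolding catP_def by (simp add: PS_ob_def map_concat comp_def)
qed

lemma PS_ar_dom_cod: "fst (PS_ar D Fo Fa a) = PS_ob Fo (fst a)" "fst (snd (PS_ar D Fo Fa a)) = PS_ob Fo (fst (snd a))"
  by (simp_all add: PS_ar_def split: prod.split)

lemma PS_ob_PhiOb: "is_functor C D Fo Fa \<Longrightarrow> P \<in> PhiOb C \<Longrightarrow> PS_ob Fo P \<in> PhiOb D"
  unfolding is_functor_def PhiOb_def PS_ob_def by auto

lemma PS_ob_ThetaOb: "is_functor C D Fo Fa \<Longrightarrow> P \<in> ThetaOb C \<Longrightarrow> PS_ob Fo P \<in> ThetaOb D"
  using PS_ob_PhiOb by (fastforce simp: ThetaOb_def PS_ob_def)

lemma (in parsummable_category) PS_ar_PhiAr: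
  assumes F: "is_psmor C D Fo Fa" and a: "a \<in> PhiAr C"
  shows "PS_ar D Fo Fa a \<in> PhiAr D"
proof -
  obtain P Q c where a_eq: "a = (P, Q, c)" by (cases a) auto
  have PQ: "P \<in> PhiOb C" "Q \<in> PhiOb C" and c: "is_sig_cls C (catP P) (catP Q) c"
    using a a_eq by (auto simp: PhiAr_def)
  let ?Xs = "catP P" and ?Ys = "catP Q"
  have Xs: "set ?Xs \<subseteq> obj C" and Ys: "set ?Ys \<subseteq> obj C"
    using c by (auto simp: is_sig_cls_def)
  obtain psi f phi where r: "rep c = (psi, f, phi)" by (cases "rep c") auto
  then have t: "injm (length ?Xs) phi" "injm (length ?Ys) psi" "f \<in> hom C (phis C phi ?Xs) (phis C psi ?Ys)"
    using is_sig_cls_rep(2)[OF c] by (auto simp: sig_trip_def)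
  have "Fa f \<in> hom D (Fo (phis C phi ?Xs)) (Fo (phis C psi ?Ys))"
    using psmor_functor[OF F] t(3) unfolding is_functor_def hom_def by auto
  then have "Fa f \<in> hom D (phis D phi (map Fo ?Xs)) (phis D psi (map Fo ?Ys))"
    using psmor_phis[OF F Xs t(1)] psmor_phis[OF F Ys t(2)] by simp
  moreover have "set (map Fo ?Xs) \<subseteq> obj D" "set (map Fo ?Ys) \<subseteq> obj D"
    using psmor_functor[OF F] Xs Ys unfolding is_functor_def by auto
  ultimately have "is_sig_cls D (map Fo ?Xs) (map Fo ?Ys) (sig_cls D (map Fo ?Xs) (map Fo ?Ys) (psi, Fa f, phi))"
    using t unfolding is_sig_cls_def sig_trip_def by auto
  then show ?thesis
    using PS_ob_PhiOb[OF psmor_functor[OF F] PQ(1)] PS_ob_PhiOb[OF psmor_functor[OF F] PQ(2)]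
    by (simp add: PS_ar_def a_eq r PhiAr_def catP_PS_ob)
qed

lemma (in parsummable_category) PS_ar_Theta:
  assumes F: "is_psmor C D Fo Fa" and a: "a \<in> arr (Theta C)"
  shows "PS_ar D Fo Fa a \<in> arr (Theta D)"
  using a PS_ar_PhiAr[OF F] PS_ob_ThetaOb[OF psmor_functor[OF F]] by (simp add: Theta_simps PS_ar_dom_cod)

theorem lemma3p19:
  fixes C :: "('o,'a) pscat" and D :: "('p,'b) pscat"
  shows "(is_parsummable C \<longrightarrow>
            cat_equiv (Theta C) (PhiSig C) id id \<and> is_psmor (Theta C) (PhiSig C) id id)
       \<and> (\<forall>Fo Fa. is_parsummable C \<and> is_parsummable D \<and> is_psmor C D Fo Fa \<longrightarrow>
            (\<forall>P\<in>obj (Theta C). id (PS_ob Fo P) = PS_ob Fo (id P) \<and> PS_ob Fo P \<in> obj (Theta D)) \<and>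
            (\<forall>a\<in>arr (Theta C). id (PS_ar D Fo Fa a) = PS_ar D Fo Fa (id a) \<and>
                                PS_ar D Fo Fa a \<in> arr (Theta D)))"
proof (intro conjI impI allI ballI)
  assume "is_parsummable C"
  then show "cat_equiv (Theta C) (PhiSig C) id id"
    by (rule parsummable_category.Theta_equiv_PhiSig[OF parsummable_category.intro])
  show "is_psmor (Theta C) (PhiSig C) id id" by (rule psmor_Theta_incl)
next
  fix Fo :: "'o \<Rightarrow> 'p" and Fa :: "'a \<Rightarrow> 'b" and P
  assume "is_parsummable C \<and> is_parsummable D \<and> is_psmor C D Fo Fa" and "P \<in> obj (Theta C)"
  then show "PS_ob Fo P \<in> obj (Theta D)"
    using PS_ob_ThetaOb psmor_functor by (metis Theta_simps(1))
next
  fix Fo :: "'o \<Rightarrow> 'p" and Fa :: "'a \<Rightarrow> 'b" and a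
  assume "is_parsummable C \<and> is_parsummable D \<and> is_psmor C D Fo Fa" and "a \<in> arr (Theta C)"
  then show "PS_ar D Fo Fa a \<in> arr (Theta D)"
    using parsummable_category.PS_ar_Theta[OF parsummable_category.intro] by blast
qed simp_all

end
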